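(* Let $\mathcal{T}$ be an $l$-eligible microdata table and run the three-phase algorithm described in the context (arbitrary tie-breaking). Phase Three consists of at most $h(\ddot{R})$ rounds, where $\ddot{R}$ is the residue set at the end of Phase Two.
   Context: A microdata table $\mathcal{T}$ is a multiset of $n$ tuples with values on $d$ quasi-identifier (QI) attributes and one sensitive attribute (SA). For a multiset $Q$ and SA value $v$, $h(Q,v)$ is the number of tuples in $Q$ with SA value $v$, $h(Q)=\max_v h(Q,v)$, pillars of $Q$ are the $v$ with $h(Q,v)=h(Q)$; $Q$ is $l$-eligible if $|Q|\ge l\cdot h(Q)$. Let $Q_1,\dots,Q_s$ be the maximal classes of tuples of $\mathcal{T}$ with identical values on all QI attributes; the algorithm only moves tuples from these groups into a residue set $R$ (initially empty), and terminates as soon as $R$ becomes $l$-eligible. Terminology (w.r.t. current state): a group $Q$ is thin if $|Q|=l\cdot h(Q)$, fat if $|Q|\ge l\cdot h(Q)+1$; conflicting if some pillar of $Q$ is a pillar of $R$ (its conflicting pillars, set $C(Q)$); dead if thin and conflicting, alive otherwise; an SA value $v$ is alive if some alive group $Q$ has $h(Q,v)>0$. Phase One: for each $i$, while $Q_i$ is not $l$-eligible, move a tuple of a pillar of $Q_i$ to $R$. Phase Two: repeat: if no SA value is alive, go to Phase Three; else pick an alive SA value $v$ minimizing $h(R,v)$ and an alive group $Q$ with $h(Q,v)>0$; if $Q$ is fat move one tuple with SA value $v$ to $R$, if thin move one tuple of each pillar of $Q$ to $R$. Phase Three proceeds in rounds. Step 1: let $P$ be the set of pillars of $R$ and $S=\emptyset$;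 while $P\ne\emptyset$, pick a group $Q$ minimizing $|C(Q)\cap P|$, add it to $S$, and set $P\leftarrow P\cap C(Q)$; then for each $Q\in S$ move one tuple of each pillar of $Q$ to $R$. Step 2: for each group $Q$ that is now alive, repeat until $Q$ is dead: if $Q$ is fat, move to $R$ a tuple of $Q$ whose SA value is not a pillar of $R$; if $Q$ is thin and non-conflicting, move one tuple of each pillar of $Q$ to $R$. All ties are broken arbitrarily. *)

theory Defs
  imports "HOL-Library.Multiset"
begin

text \<open>A microdata table is a multiset of tuples (QI value, SA value); the QI value
of type 'q stands for the vector of the d QI attributes.  Since the algorithm and all
notions only look at SA values inside groups, a group / the residue set is represented
by the multiset of SA values of its tuples.\<close>

definition hv :: "'v multiset \<Rightarrow> 'v \<Rightarrow> nat" where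
  "hv Q v = count Q v"

definition hmax :: "'v multiset \<Rightarrow> nat" where
  "hmax Q = (if Q = {#} then 0 else Max (count Q ` set_mset Q))"

definition pillars :: "'v multiset \<Rightarrow> 'v set" where
  "pillars Q = {v. hv Q v = hmax Q}"

definition eligible :: "nat \<Rightarrow> 'v multiset \<Rightarrow> bool" where
  "eligible l Q \<longleftrightarrow> size Q \<ge> l * hmax Q"

definition thin :: "nat \<Rightarrow> 'v multiset \<Rightarrow> bool" where
  "thin l Q \<longleftrightarrow> size Q = l * hmax Q"

definition fat :: "nat \<Rightarrow> 'v multiset \<Rightarrow> bool" where
  "fat l Q \<longleftrightarrow> size Q \<ge> l * hmax Q + 1"

definition cpillars :: "'v multiset \<Rightarrow> 'v multiset \<Rightarrow> 'v set" where
  "cpillars R Q = pillars Q \<inter> pillars R"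

definition conflicting :: "'v multiset \<Rightarrow> 'v multiset \<Rightarrow> bool" where
  "conflicting R Q \<longleftrightarrow> cpillars R Q \<noteq> {}"

definition dead :: "nat \<Rightarrow> 'v multiset \<Rightarrow> 'v multiset \<Rightarrow> bool" where
  "dead l R Q \<longleftrightarrow> thin l Q \<and> conflicting R Q"

definition alive :: "nat \<Rightarrow> 'v multiset \<Rightarrow> 'v multiset \<Rightarrow> bool" where
  "alive l R Q \<longleftrightarrow> \<not> dead l R Q"

definition alive_val :: "nat \<Rightarrow> 'q set \<Rightarrow> ('q \<Rightarrow> 'v multiset) \<Rightarrow> 'v multiset \<Rightarrow> 'v \<Rightarrow> bool" where
  "alive_val l Qs G R v \<longleftrightarrow> (\<exists>q\<in>Qs. alive l R (G q) \<and> hv (G q) v > 0)"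

definition group_ids :: "('q \<times> 'v) multiset \<Rightarrow> 'q set" where
  "group_ids T = fst ` set_mset T"

definition group_of :: "('q \<times> 'v) multiset \<Rightarrow> 'q \<Rightarrow> 'v multiset" where
  "group_of T q = image_mset snd (filter_mset (\<lambda>t. fst t = q) T)"

datatype ('q, 'v) ctrl =
    P1 "'q list"                        \<comment> \<open>Phase One, remaining groups Q_i, Q_(i+1), ...\<close>
  | P2
  | Pend 'q "'v list" "('q, 'v) ctrl"   \<comment> \<open>pending single-tuple moves from a group, then continue\<close>
  | S1 "'v set" "'q set"                \<comment> \<open>Phase Three Step 1, greedy selection: P and S\<close>
  | S1Exec "'q list"                    \<comment> \<open>Phase Three Step 1, moving pillars of groups in S\<close>
  | S2 "'q list"                        \<comment> \<open>Phase Three Step 2, groups alive after Step 1\<close>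

record ('q, 'v) conf =
  grp :: "'q \<Rightarrow> 'v multiset"
  res :: "'v multiset"
  ctl :: "('q, 'v) ctrl"
  rnd :: nat                    \<comment> \<open>number of Phase Three rounds started so far\<close>
  rdd :: "'v multiset"          \<comment> \<open>residue set at the end of Phase Two\<close>

definition mv :: "'q \<Rightarrow> 'v \<Rightarrow> ('q, 'v) conf \<Rightarrow> ('q, 'v) conf" where
  "mv q v c = c\<lparr>grp := (grp c)(q := grp c q - {#v#}), res := res c + {#v#}\<rparr>"

definition init_conf :: "('q \<times> 'v) multiset \<Rightarrow> 'q list \<Rightarrow> ('q, 'v) conf" where
  "init_conf T qs = \<lparr>grp = group_of T, res = {#}, ctl = P1 qs, rnd = 0, rdd = {#}\<rparr>"

text \<open>Phase One always runs to completion; from then on, every step is only possible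
while R is not l-eligible (the algorithm terminates as soon as R is l-eligible, checked
after every single tuple move).\<close>

inductive step :: "nat \<Rightarrow> 'q set \<Rightarrow> ('q, 'v) conf \<Rightarrow> ('q, 'v) conf \<Rightarrow> bool"
  for l :: nat and Qs :: "'q set" where
  p1_move: "\<lbrakk>ctl c = P1 (q # qs); \<not> eligible l (grp c q); v \<in> pillars (grp c q)\<rbrakk>
      \<Longrightarrow> step l Qs c (mv q v c)"
| p1_next: "\<lbrakk>ctl c = P1 (q # qs); eligible l (grp c q)\<rbrakk>
      \<Longrightarrow> step l Qs c (c\<lparr>ctl := P1 qs\<rparr>)"
| p1_done: "ctl c = P1 [] \<Longrightarrow> step l Qs c (c\<lparr>ctl := P2\<rparr>)"
| pend_move: "\<lbrakk>\<not> eligible l (res c); ctl c = Pend q (v # vs) k\<rbrakk>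
      \<Longrightarrow> step l Qs c ((mv q v c)\<lparr>ctl := Pend q vs k\<rparr>)"
| pend_done: "\<lbrakk>\<not> eligible l (res c); ctl c = Pend q [] k\<rbrakk>
      \<Longrightarrow> step l Qs c (c\<lparr>ctl := k\<rparr>)"
| p2_to3: "\<lbrakk>\<not> eligible l (res c); ctl c = P2; \<not> (\<exists>v. alive_val l Qs (grp c) (res c) v)\<rbrakk>
      \<Longrightarrow> step l Qs c (c\<lparr>ctl := S1 (pillars (res c)) {}, rnd := 1, rdd := res c\<rparr>)"
| p2_fat: "\<lbrakk>\<not> eligible l (res c); ctl c = P2; alive_val l Qs (grp c) (res c) v;
      \<forall>w. alive_val l Qs (grp c) (res c) w \<longrightarrow> hv (res c) v \<le> hv (res c) w;
      q \<in> Qs; alive l (res c) (grp c q); hv (grp c q) v > 0; fat l (grp c q)\<rbrakk>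
      \<Longrightarrow> step l Qs c (mv q v c)"
| p2_thin: "\<lbrakk>\<not> eligible l (res c); ctl c = P2; alive_val l Qs (grp c) (res c) v;
      \<forall>w. alive_val l Qs (grp c) (res c) w \<longrightarrow> hv (res c) v \<le> hv (res c) w;
      q \<in> Qs; alive l (res c) (grp c q); hv (grp c q) v > 0; thin l (grp c q);
      distinct vs; set vs = pillars (grp c q)\<rbrakk>
      \<Longrightarrow> step l Qs c (c\<lparr>ctl := Pend q vs P2\<rparr>)"
| s1_pick: "\<lbrakk>\<not> eligible l (res c); ctl c = S1 P S; P \<noteq> {}; q \<in> Qs;
      \<forall>q'\<in>Qs. card (cpillars (res c) (grp c q) \<inter> P) \<le> card (cpillars (res c) (grp c q') \<inter> P)\<rbrakk>
      \<Longrightarrow> step l Qs c (c\<lparr>ctl := S1 (P \<inter> cpillars (res c) (grp c q)) (insert q S)\<rparr>)"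
| s1_exec: "\<lbrakk>\<not> eligible l (res c); ctl c = S1 {} S; distinct qs; set qs = S\<rbrakk>
      \<Longrightarrow> step l Qs c (c\<lparr>ctl := S1Exec qs\<rparr>)"
| s1x_step: "\<lbrakk>\<not> eligible l (res c); ctl c = S1Exec (q # qs); distinct vs; set vs = pillars (grp c q)\<rbrakk>
      \<Longrightarrow> step l Qs c (c\<lparr>ctl := Pend q vs (S1Exec qs)\<rparr>)"
| s1x_done: "\<lbrakk>\<not> eligible l (res c); ctl c = S1Exec []; distinct qs;
      set qs = {q \<in> Qs. alive l (res c) (grp c q)}\<rbrakk>
      \<Longrightarrow> step l Qs c (c\<lparr>ctl := S2 qs\<rparr>)"
| s2_dead: "\<lbrakk>\<not> eligible l (res c); ctl c = S2 (q # qs); dead l (res c) (grp c q)\<rbrakk>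
      \<Longrightarrow> step l Qs c (c\<lparr>ctl := S2 qs\<rparr>)"
| s2_fat: "\<lbrakk>\<not> eligible l (res c); ctl c = S2 (q # qs); fat l (grp c q);
      v \<in># grp c q; v \<notin> pillars (res c)\<rbrakk>
      \<Longrightarrow> step l Qs c (mv q v c)"
| s2_thin: "\<lbrakk>\<not> eligible l (res c); ctl c = S2 (q # qs); thin l (grp c q);
      \<not> conflicting (res c) (grp c q); distinct vs; set vs = pillars (grp c q)\<rbrakk>
      \<Longrightarrow> step l Qs c (c\<lparr>ctl := Pend q vs (S2 (q # qs))\<rparr>)"
| s2_done: "\<lbrakk>\<not> eligible l (res c); ctl c = S2 []\<rbrakk>
      \<Longrightarrow> step l Qs c (c\<lparr>ctl := S1 (pillars (res c)) {}, rnd := rnd c + 1\<rparr>)"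

end

theory Submission imports Defs begin

text \<open>Measure progress by the deficit \<open>l \<cdot> h(R) - |R|\<close>, which is positive as long as
the algorithm runs and at most \<open>l \<cdot> h(R\<ddot>)\<close> when Phase Three starts.  Each round lowers
it by at least \<open>l\<close>.  Step 1 selects groups \<open>S\<close> such that every pillar of \<open>R\<close> fails to be
a pillar of some group of \<open>S\<close>; moving one tuple of each pillar of each group of \<open>S\<close> therefore
raises \<open>h(R)\<close> by at most \<open>|S| - 1\<close>, and Step 2 only adds tuples of non-pillars of \<open>R\<close>.  On
the other hand each group of \<open>S\<close> started the round \<open>l\<close>-eligible, has lost a level of its
maximal multiplicity, and ends the round thin, so it has given at least \<open>l\<close> tuples to \<open>R\<close>.\<close>

section \<open>Maximal multiplicity and pillars\<close>

lemma count_le_hmax: "count Q v \<le> hmax Q"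
proof (cases "v \<in># Q")
  case True
  then show ?thesis by (auto simp: hmax_def)
next
  case False
  then show ?thesis by (simp add: not_in_iff)
qed

lemma hmax_le_iff: "hmax Q \<le> B \<longleftrightarrow> (\<forall>v. count Q v \<le> B)"
proof
  assume "hmax Q \<le> B"
  then show "\<forall>v. count Q v \<le> B"
    using count_le_hmax[of Q] le_trans by blast
next
  assume "\<forall>v. count Q v \<le> B"
  then show "hmax Q \<le> B"
    by (simp add: hmax_def Max_le_iff)
qed

lemma hmax_empty [simp]: "hmax {#} = 0"
  by (simp add: hmax_def)

lemma hmax_attained:
  assumes "Q \<noteq> {#}"
  obtains v where "v \<in># Q" and "count Q v = hmax Q"
proof -
  have "Max (count Q ` set_mset Q) \<in> count Q ` set_mset Q"
    using assms by (intro Max_in) auto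
  then obtain v where "v \<in># Q" and "count Q v = Max (count Q ` set_mset Q)"
    by auto
  with assms that show ?thesis
    by (simp add: hmax_def)
qed

lemma hmax_pos:
  assumes "Q \<noteq> {#}"
  shows "0 < hmax Q"
proof -
  obtain v where "v \<in># Q" and "count Q v = hmax Q"
    using hmax_attained[OF assms] .
  then show ?thesis
    using count_greater_zero_iff[of Q v] by linarith
qed

lemma pillars_subset_set_mset:
  assumes "Q \<noteq> {#}"
  shows "pillars Q \<subseteq> set_mset Q"
proof
  fix v
  assume "v \<in> pillars Q"
  then have "count Q v = hmax Q"
    by (simp add: pillars_def hv_def)
  then show "v \<in># Q"
    using hmax_pos[OF assms] count_greater_zero_iff[of Q v] by linarith
qed

lemma finite_pillars: "Q \<noteq> {#} \<Longrightarrow> finite (pillars Q)"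
  using pillars_subset_set_mset finite_subset by blast

lemma pillars_nonempty: "Q \<noteq> {#} \<Longrightarrow> pillars Q \<noteq> {}"
  using hmax_attained unfolding pillars_def hv_def by blast

lemma pillars_empty [simp]: "pillars {#} = UNIV"
  by (simp add: pillars_def hv_def)

lemma count_less_hmax: "v \<notin> pillars Q \<Longrightarrow> count Q v < hmax Q"
  using count_le_hmax[of Q v] by (auto simp: pillars_def hv_def)

lemma hmax_mono: "A \<subseteq># B \<Longrightarrow> hmax A \<le> hmax B"
  by (meson count_le_hmax hmax_le_iff mset_subset_eq_count order_trans)

lemma hmax_add_non_pillar:
  assumes "count R v < hmax R"
  shows "hmax (add_mset v R) = hmax R"
proof (rule antisym)
  show "hmax (add_mset v R) \<le> hmax R"
    using assms count_le_hmax[of R] by (auto simp: hmax_le_iff)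
  show "hmax R \<le> hmax (add_mset v R)"
    by (rule hmax_mono) simp
qed

lemma hmax_diff_pillars_less:
  assumes "Q \<noteq> {#}"
  shows "hmax (Q - mset_set (pillars Q)) < hmax Q"
proof -
  have "count (Q - mset_set (pillars Q)) v \<le> hmax Q - 1" for v
    using count_less_hmax[of v Q] finite_pillars[OF assms]
    by (cases "v \<in> pillars Q") (auto simp: pillars_def hv_def)
  then have "hmax (Q - mset_set (pillars Q)) \<le> hmax Q - 1"
    by (simp add: hmax_le_iff)
  then show ?thesis
    using hmax_pos[OF assms] by linarith
qed

lemma card_pillars_mult_hmax_le_size:
  assumes "Q \<noteq> {#}"
  shows "card (pillars Q) * hmax Q \<le> size Q"
proof -
  define N where "N = (\<Sum>v\<in>pillars Q. replicate_mset (hmax Q) v)"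
  have count_N: "count N v = (if v \<in> pillars Q then hmax Q else 0)" for v
    unfolding N_def count_sum using finite_pillars[OF assms] by (simp add: count_replicate_mset)
  have "N \<subseteq># Q"
    unfolding subseteq_mset_def count_N by (simp add: pillars_def hv_def)
  then have "size N \<le> size Q"
    by (rule size_mset_mono)
  moreover have "size N = card (pillars Q) * hmax Q"
    unfolding N_def by simp
  ultimately show ?thesis
    by simp
qed

text \<open>The bound \<open>l \<cdot> h\<close> drops by \<open>l\<close> while the size drops by the number \<open>p\<close> of
pillars; when \<open>p > l\<close>, use \<open>p \<cdot> h \<le> |Q|\<close> instead of eligibility.\<close>

lemma eligible_diff_pillars:
  assumes el: "eligible l Q"
  shows "eligible l (Q - mset_set (pillars Q))"
proof (cases "Q = {#}")
  case True
  then show ?thesis by (simp add: eligible_def)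
next
  case ne: False
  define h where "h = hmax Q"
  define p where "p = card (pillars Q)"
  have "mset_set (pillars Q) \<subseteq># Q"
    using finite_pillars[OF ne] pillars_subset_set_mset[OF ne]
    by (metis finite_set_mset mset_set_set_mset_msubset msubset_mset_set_iff subset_mset.order_trans)
  then have size_diff: "size (Q - mset_set (pillars Q)) = size Q - p"
    by (simp add: size_Diff_submset p_def)
  have h_diff: "hmax (Q - mset_set (pillars Q)) \<le> h - 1"
    using hmax_diff_pillars_less[OF ne] h_def by linarith
  have el_h: "l * h \<le> size Q"
    using el by (simp add: eligible_def h_def)
  have pillars_h: "p * h \<le> size Q"
    using card_pillars_mult_hmax_le_size[OF ne] by (simp add: p_def h_def)
  have "l * (h - 1) \<le> size Q - p"
  proof (cases "p \<ge> l")
    case True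
    then have "l * (h - 1) \<le> p * (h - 1)"
      by (rule mult_le_mono1)
    then show ?thesis
      using pillars_h by (simp add: diff_mult_distrib2)
  next
    case False
    then show ?thesis using el_h by (simp add: diff_mult_distrib2)
  qed
  moreover have "l * hmax (Q - mset_set (pillars Q)) \<le> l * (h - 1)"
    using h_diff by (rule mult_le_mono2)
  ultimately have "l * hmax (Q - mset_set (pillars Q)) \<le> size (Q - mset_set (pillars Q))"
    using size_diff by linarith
  then show ?thesis
    by (simp add: eligible_def)
qed

lemma eligible_diff_pillar_list:
  assumes "eligible l Q" and "distinct ws" and "set ws = pillars Q"
  shows "eligible l (Q - mset ws)"
  using eligible_diff_pillars[OF assms(1)] assms(2,3) by (metis mset_set_set)

lemma eligible_diff_fat:
  assumes "fat l Q" and "v \<in># Q"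
  shows "eligible l (Q - {#v#})"
proof -
  have "l * hmax (Q - {#v#}) \<le> l * hmax Q"
    by (intro mult_le_mono2 hmax_mono) simp
  moreover have "size (Q - {#v#}) = size Q - 1"
    using assms(2) by (simp add: size_Diff_singleton)
  ultimately show ?thesis
    using assms(1) unfolding fat_def eligible_def by linarith
qed

lemma thin_imp_eligible: "thin l Q \<Longrightarrow> eligible l Q"
  by (simp add: thin_def eligible_def)

lemma not_eligible_nonempty: "\<not> eligible l R \<Longrightarrow> R \<noteq> {#}"
  by (auto simp: eligible_def)

section \<open>The deficit of the residue set\<close>

definition deficit :: "nat \<Rightarrow> 'v multiset \<Rightarrow> int" where
  "deficit l R = int (l * hmax R) - int (size R)"

lemma eligible_iff_deficit: "eligible l R \<longleftrightarrow> deficit l R \<le> 0"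
  unfolding eligible_def deficit_def by (simp only: diff_le_0_iff_le of_nat_le_iff)

lemma deficit_le: "deficit l R \<le> int (l * hmax R)"
  by (simp add: deficit_def)

lemma deficit_decrease:
  assumes "size R0 + l * k \<le> size R" and "hmax R + 1 \<le> hmax R0 + k"
  shows "deficit l R + int l \<le> deficit l R0"
proof -
  have "l * (hmax R + 1) \<le> l * (hmax R0 + k)"
    using assms(2) by (rule mult_le_mono2)
  then have "l * hmax R + l \<le> l * hmax R0 + l * k"
    by (simp add: algebra_simps)
  then show ?thesis
    using assms(1) unfolding deficit_def by linarith
qed

lemma hmax_bound_by_cover:
  assumes fin: "finite S" and ne: "R0 \<noteq> {#}"
    and gain: "\<forall>v. count R v \<le> count R0 v + card {q\<in>S. v \<in> pillars (G q)}"
    and cover: "\<forall>v\<in>pillars R0. \<exists>q\<in>S. v \<notin> pillars (G q)"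
  shows "hmax R + 1 \<le> hmax R0 + card S"
proof -
  have "S \<noteq> {}"
    using pillars_nonempty[OF ne] cover by blast
  then have S_pos: "card S \<ge> 1"
    using fin by (simp add: Suc_le_eq card_gt_0_iff)
  have "count R v \<le> hmax R0 + card S - 1" for v
  proof (cases "v \<in> pillars R0")
    case True
    then obtain q where "q \<in> S" and "v \<notin> pillars (G q)"
      using cover by blast
    then have "card {q\<in>S. v \<in> pillars (G q)} < card S"
      using fin by (intro psubset_card_mono) auto
    moreover have "count R0 v = hmax R0"
      using True by (simp add: pillars_def hv_def)
    ultimately show ?thesis
      using gain[rule_format, of v] by linarith
  next
    case False
    moreover have "card {q\<in>S. v \<in> pillars (G q)} \<le> card S"
      using fin by (intro card_mono) auto
    ultimately show ?thesis
      using gain[rule_format, of v] count_less_hmax[OF False] by linarith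
  qed
  then have "hmax R \<le> hmax R0 + card S - 1"
    by (simp add: hmax_le_iff)
  then show ?thesis
    using S_pos by linarith
qed

lemma size_thin_le:
  assumes "eligible l G0" and "thin l G" and "hmax G < hmax G0"
  shows "size G + l \<le> size G0"
proof -
  have "l * (hmax G + 1) \<le> l * hmax G0"
    using assms(3) by (intro mult_le_mono2) simp
  then show ?thesis
    using assms(1,2) by (simp add: eligible_def thin_def algebra_simps)
qed

section \<open>Invariants of the algorithm\<close>

lemma mv_simps [simp]:
  "grp (mv q v c) = (grp c)(q := grp c q - {#v#})"
  "res (mv q v c) = add_mset v (res c)"
  "ctl (mv q v c) = ctl c"
  "rnd (mv q v c) = rnd c"
  "rdd (mv q v c) = rdd c"
  by (simp_all add: mv_def)

lemma size_sum_move_mono: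
  assumes "finite S"
  shows "size R + (\<Sum>q'\<in>S. size (G q'))
    \<le> size (add_mset v R) + (\<Sum>q'\<in>S. size ((G(q := G q - {#v#})) q'))"
proof (cases "q \<in> S")
  case False
  then have "(\<Sum>q'\<in>S. size ((G(q := G q - {#v#})) q')) = (\<Sum>q'\<in>S. size (G q'))"
    by (intro sum.cong) auto
  then show ?thesis by simp
next
  case True
  have "size (G q) \<le> size (G q - {#v#}) + 1"
    by (cases "v \<in># G q") (auto simp: size_Diff_singleton)
  then show ?thesis
    using True assms by (simp add: sum.remove)
qed

lemma eligible_if_no_alive_val:
  assumes "\<not> (\<exists>v. alive_val l Qs G R v)" and "q \<in> Qs"
  shows "eligible l (G q)"
proof (cases "alive l R (G q)")
  case True
  then have "G q = {#}"
    using assms by (auto simp: alive_val_def hv_def multiset_eq_iff count_eq_zero_iff)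
  then show ?thesis by (simp add: eligible_def)
next
  case False
  then show ?thesis by (simp add: alive_def dead_def thin_imp_eligible)
qed

text \<open>A round of Phase Three starts with residue set \<open>R0\<close> and groups \<open>G0\<close>; \<open>D\<close> is the
residue set at the end of Phase Two.\<close>

definition round_start :: "nat \<Rightarrow> 'q set \<Rightarrow> nat \<Rightarrow> 'v multiset \<Rightarrow> 'v multiset
    \<Rightarrow> ('q \<Rightarrow> 'v multiset) \<Rightarrow> bool" where
  "round_start l Qs r D R0 G0 \<longleftrightarrow> 1 \<le> r \<and> \<not> eligible l R0 \<and>
     deficit l R0 + int (l * (r - 1)) \<le> deficit l D \<and> (\<forall>q\<in>Qs. eligible l (G0 q))"

lemma round_start_bound:
  assumes "round_start l Qs r D R0 G0"
  shows "r \<le> hmax D"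
proof -
  have "0 < deficit l R0" and "1 \<le> r"
    and "deficit l R0 + int (l * (r - 1)) \<le> deficit l D"
    using assms by (auto simp: round_start_def eligible_iff_deficit)
  then have "l * (r - 1) < l * hmax D"
    using deficit_le[of l D] by linarith
  then have "r - 1 < hmax D"
    by simp
  then show ?thesis
    using \<open>1 \<le> r\<close> by linarith
qed

text \<open>Step 1 of a round: \<open>P\<close> is the current set of candidate pillars and \<open>S\<close> the selected
groups.  An empty group has every SA value as a pillar, so selecting it cannot shrink \<open>P\<close>;
by minimality it is then selected only when no group can, and \<open>P\<close> never becomes empty.\<close>

definition selecting :: "'q set \<Rightarrow> 'v multiset \<Rightarrow> ('q \<Rightarrow> 'v multiset) \<Rightarrow> 'v set \<Rightarrow> 'q set
    \<Rightarrow> bool" where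
  "selecting Qs R0 G0 P S \<longleftrightarrow> S \<subseteq> Qs \<and> P \<subseteq> pillars R0 \<and>
     (\<forall>v\<in>pillars R0 - P. \<exists>q\<in>S. v \<notin> pillars (G0 q)) \<and>
     ((\<exists>q\<in>S. G0 q = {#}) \<longrightarrow> P \<noteq> {} \<and> (\<forall>q\<in>Qs. P \<subseteq> cpillars R0 (G0 q)))"

definition covering_selection :: "'q set \<Rightarrow> 'v multiset \<Rightarrow> ('q \<Rightarrow> 'v multiset) \<Rightarrow> 'q set
    \<Rightarrow> bool" where
  "covering_selection Qs R0 G0 S \<longleftrightarrow> S \<subseteq> Qs \<and>
     (\<forall>v\<in>pillars R0. \<exists>q\<in>S. v \<notin> pillars (G0 q)) \<and> (\<forall>q\<in>S. G0 q \<noteq> {#})"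

definition strip_pillars :: "('q \<Rightarrow> 'v multiset) \<Rightarrow> 'q set \<Rightarrow> 'q \<Rightarrow> 'v multiset" where
  "strip_pillars G0 Done q = (if q \<in> Done then G0 q - mset_set (pillars (G0 q)) else G0 q)"

text \<open>Executing Step 1: the groups in \<open>Done\<close> have given up one tuple of each of their pillars,
those in \<open>qs\<close> are still to do so.\<close>

definition executing :: "'q set \<Rightarrow> ('q \<Rightarrow> 'v multiset) \<Rightarrow> 'v multiset \<Rightarrow> 'v multiset
    \<Rightarrow> ('q \<Rightarrow> 'v multiset) \<Rightarrow> 'q set \<Rightarrow> 'q set \<Rightarrow> 'q list \<Rightarrow> bool" where
  "executing Qs G R R0 G0 S Done qs \<longleftrightarrow> covering_selection Qs R0 G0 S \<and>
     distinct qs \<and> set qs \<inter> Done = {} \<and> S = Done \<union> set qs \<and> G = strip_pillars G0 Done \<and>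
     (\<forall>v. count R v \<le> count R0 v + card {q\<in>Done. v \<in> pillars (G0 q)}) \<and>
     size R0 + (\<Sum>q\<in>S. size (G0 q)) \<le> size R + (\<Sum>q\<in>S. size (G q))"

text \<open>\<dots> while the pillars \<open>ws\<close> of group \<open>q\<close> have been moved and \<open>vs\<close> are pending.\<close>

definition executing_group :: "'q set \<Rightarrow> ('q \<Rightarrow> 'v multiset) \<Rightarrow> 'v multiset \<Rightarrow> 'v multiset
    \<Rightarrow> ('q \<Rightarrow> 'v multiset) \<Rightarrow> 'q set \<Rightarrow> 'q set \<Rightarrow> 'q \<Rightarrow> 'v list \<Rightarrow> 'q list \<Rightarrow> 'v list
    \<Rightarrow> bool" where
  "executing_group Qs G R R0 G0 S Done q vs qs ws \<longleftrightarrow> covering_selection Qs R0 G0 S \<and>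
     distinct (q # qs) \<and> set (q # qs) \<inter> Done = {} \<and> S = Done \<union> set (q # qs) \<and>
     distinct (ws @ vs) \<and> set (ws @ vs) = pillars (G0 q) \<and>
     G = (strip_pillars G0 Done)(q := G0 q - mset ws) \<and>
     (\<forall>v. count R v \<le> count R0 v + card {q\<in>Done. v \<in> pillars (G0 q)} + count (mset ws) v) \<and>
     size R0 + (\<Sum>q\<in>S. size (G0 q)) \<le> size R + (\<Sum>q\<in>S. size (G q))"

text \<open>Step 2 of a round: the groups of \<open>lst\<close> are still to be processed.\<close>

definition cleaning :: "nat \<Rightarrow> 'q set \<Rightarrow> ('q \<Rightarrow> 'v multiset) \<Rightarrow> 'v multiset \<Rightarrow> 'v multiset
    \<Rightarrow> ('q \<Rightarrow> 'v multiset) \<Rightarrow> 'q set \<Rightarrow> 'q list \<Rightarrow> bool" where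
  "cleaning l Qs G R R0 G0 S lst \<longleftrightarrow> S \<subseteq> Qs \<and> hmax R + 1 \<le> hmax R0 + card S \<and>
     size R0 + (\<Sum>q\<in>S. size (G0 q)) \<le> size R + (\<Sum>q\<in>S. size (G q)) \<and>
     (\<forall>q\<in>S. hmax (G q) < hmax (G0 q)) \<and> (\<forall>q\<in>S - set lst. thin l (G q))"

definition cleaning_group :: "nat \<Rightarrow> ('q \<Rightarrow> 'v multiset) \<Rightarrow> 'v multiset \<Rightarrow> 'q \<Rightarrow> 'v list
    \<Rightarrow> bool" where
  "cleaning_group l G R q vs \<longleftrightarrow> (\<exists>Q ws. eligible l Q \<and> distinct (ws @ vs) \<and>
     set (ws @ vs) = pillars Q \<and> G q = Q - mset ws \<and> (\<forall>v\<in>set vs. count R v < hmax R))"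

fun ctl_inv :: "nat \<Rightarrow> 'q set \<Rightarrow> ('q \<Rightarrow> 'v multiset) \<Rightarrow> 'v multiset \<Rightarrow> 'v multiset
    \<Rightarrow> ('q \<Rightarrow> 'v multiset) \<Rightarrow> ('q, 'v) ctrl \<Rightarrow> bool" where
  "ctl_inv l Qs G R R0 G0 (S1 P S) \<longleftrightarrow> G = G0 \<and> R = R0 \<and> selecting Qs R0 G0 P S"
| "ctl_inv l Qs G R R0 G0 (S1Exec qs) \<longleftrightarrow> (\<exists>S Done. executing Qs G R R0 G0 S Done qs)"
| "ctl_inv l Qs G R R0 G0 (Pend q vs (S1Exec qs)) \<longleftrightarrow>
     (\<exists>S Done ws. executing_group Qs G R R0 G0 S Done q vs qs ws)"
| "ctl_inv l Qs G R R0 G0 (S2 lst) \<longleftrightarrow>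
     (\<exists>S. cleaning l Qs G R R0 G0 S lst) \<and> (\<forall>q\<in>Qs. eligible l (G q))"
| "ctl_inv l Qs G R R0 G0 (Pend q vs (S2 lst)) \<longleftrightarrow> q \<in> set lst \<and>
     (\<exists>S. cleaning l Qs G R R0 G0 S lst) \<and> cleaning_group l G R q vs \<and>
     (\<forall>q'\<in>Qs - {q}. eligible l (G q'))"
| "ctl_inv l Qs G R R0 G0 _ \<longleftrightarrow> False"

definition phase3_inv :: "nat \<Rightarrow> 'q set \<Rightarrow> ('q, 'v) conf \<Rightarrow> bool" where
  "phase3_inv l Qs c \<longleftrightarrow> (\<exists>R0 G0. round_start l Qs (rnd c) (rdd c) R0 G0 \<and>
     ctl_inv l Qs (grp c) (res c) R0 G0 (ctl c))"

fun before_phase3 :: "('q, 'v) ctrl \<Rightarrow> bool" where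
  "before_phase3 (P1 qs) \<longleftrightarrow> True"
| "before_phase3 P2 \<longleftrightarrow> True"
| "before_phase3 (Pend q vs P2) \<longleftrightarrow> True"
| "before_phase3 _ \<longleftrightarrow> False"

definition algo_inv :: "nat \<Rightarrow> 'q set \<Rightarrow> ('q, 'v) conf \<Rightarrow> bool" where
  "algo_inv l Qs c \<longleftrightarrow> (rnd c = 0 \<and> before_phase3 (ctl c)) \<or> phase3_inv l Qs c"

lemma selecting_pick:
  assumes sel: "selecting Qs R0 G0 P S" and R0: "R0 \<noteq> {#}" and "P \<noteq> {}" and "q \<in> Qs"
    and min: "\<forall>q'\<in>Qs. card (cpillars R0 (G0 q) \<inter> P) \<le> card (cpillars R0 (G0 q') \<inter> P)"
  shows "selecting Qs R0 G0 (P \<inter> cpillars R0 (G0 q)) (insert q S)"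
proof -
  have P_pillars: "P \<subseteq> pillars R0"
    and full: "(\<exists>q\<in>S. G0 q = {#}) \<Longrightarrow> P \<noteq> {} \<and> (\<forall>q'\<in>Qs. P \<subseteq> cpillars R0 (G0 q'))"
    using sel by (auto simp: selecting_def)
  have "finite P"
    using P_pillars finite_pillars[OF R0] finite_subset by blast
  have "P \<subseteq> cpillars R0 (G0 q')" if "G0 q = {#}" and "q' \<in> Qs" for q'
  proof -
    have "cpillars R0 (G0 q) \<inter> P = P"
      using that(1) P_pillars by (auto simp: cpillars_def)
    then have "card P \<le> card (cpillars R0 (G0 q') \<inter> P)"
      using min that(2) by metis
    then show ?thesis
      using card_seteq[OF \<open>finite P\<close>, of "cpillars R0 (G0 q') \<inter> P"] by blast
  qed
  then have "P \<inter> cpillars R0 (G0 q) = P \<and> (\<forall>q'\<in>Qs. P \<subseteq> cpillars R0 (G0 q'))"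
    if "\<exists>q'\<in>insert q S. G0 q' = {#}"
    using that full \<open>q \<in> Qs\<close> by blast
  then show ?thesis
    using sel \<open>q \<in> Qs\<close> \<open>P \<noteq> {}\<close> by (auto simp: selecting_def cpillars_def)
qed

lemma executing_start:
  assumes "selecting Qs R0 G0 {} S" and "distinct qs" and "set qs = S"
  shows "executing Qs G0 R0 R0 G0 S {} qs"
  using assms
  by (fastforce simp: selecting_def executing_def covering_selection_def strip_pillars_def)

lemma executing_group_start:
  assumes "executing Qs G R R0 G0 S Done (q # qs)" and "distinct vs" and "set vs = pillars (G q)"
  shows "executing_group Qs G R R0 G0 S Done q vs qs []"
  using assms by (auto simp: executing_def executing_group_def strip_pillars_def)

lemma executing_group_move:
  assumes "finite Qs" and ex: "executing_group Qs G R R0 G0 S Done q (v # vs) qs ws"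
  shows "executing_group Qs (G(q := G q - {#v#})) (add_mset v R) R0 G0 S Done q vs qs (ws @ [v])"
proof -
  have "finite S"
    using ex \<open>finite Qs\<close> finite_subset by (auto simp: executing_group_def covering_selection_def)
  then show ?thesis
    using ex size_sum_move_mono[OF \<open>finite S\<close>, of R G v q]
    by (auto simp: executing_group_def diff_diff_add_mset intro: order_trans)
qed

lemma executing_group_done:
  assumes "finite Qs" and ex: "executing_group Qs G R R0 G0 S Done q [] qs ws"
  shows "executing Qs G R R0 G0 S (insert q Done) qs"
proof -
  have q_new: "q \<notin> Done" and dist: "distinct ws" and ws: "set ws = pillars (G0 q)"
    and gain: "\<forall>v. count R v \<le> count R0 v + card {q\<in>Done. v \<in> pillars (G0 q)} + count (mset ws) v"
    and "Done \<subseteq> Qs"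
    using ex by (auto simp: executing_group_def covering_selection_def)
  then have "finite Done"
    using \<open>finite Qs\<close> finite_subset by blast
  have "mset ws = mset_set (pillars (G0 q))"
    using dist ws by (metis mset_set_set)
  moreover have "count R v \<le> count R0 v + card {q'\<in>insert q Done. v \<in> pillars (G0 q')}" for v
  proof -
    have "count (mset ws) v = (if v \<in> pillars (G0 q) then 1 else 0)"
      using dist ws by (simp add: distinct_count_atmost_1)
    moreover have "{q'\<in>insert q Done. v \<in> pillars (G0 q')} = (if v \<in> pillars (G0 q)
        then insert q {q'\<in>Done. v \<in> pillars (G0 q')} else {q'\<in>Done. v \<in> pillars (G0 q')})"
      by auto
    then have "card {q'\<in>insert q Done. v \<in> pillars (G0 q')}
        = card {q'\<in>Done. v \<in> pillars (G0 q')} + (if v \<in> pillars (G0 q) then 1 else 0)"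
      using q_new \<open>finite Done\<close> by auto
    ultimately show ?thesis
      using gain[rule_format, of v] by (simp only:)
  qed
  ultimately show ?thesis
    using ex by (auto simp: executing_group_def executing_def strip_pillars_def)
qed

lemma cleaning_start:
  assumes "finite Qs" and "R0 \<noteq> {#}" and eligible0: "\<forall>q\<in>Qs. eligible l (G0 q)"
    and ex: "executing Qs G R R0 G0 S Done []" and lst: "set lst = {q\<in>Qs. alive l R (G q)}"
  shows "cleaning l Qs G R R0 G0 S lst" and "\<forall>q\<in>Qs. eligible l (G q)"
proof -
  have "S \<subseteq> Qs" and cover: "\<forall>v\<in>pillars R0. \<exists>q\<in>S. v \<notin> pillars (G0 q)"
    and nonempty: "\<forall>q\<in>S. G0 q \<noteq> {#}" and G: "G = strip_pillars G0 S"
    and gain: "\<forall>v. count R v \<le> count R0 v + card {q\<in>S. v \<in> pillars (G0 q)}"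
    and size: "size R0 + (\<Sum>q\<in>S. size (G0 q)) \<le> size R + (\<Sum>q\<in>S. size (G q))"
    using ex by (auto simp: executing_def covering_selection_def)
  then have "finite S"
    using \<open>finite Qs\<close> finite_subset by blast
  have "hmax R + 1 \<le> hmax R0 + card S"
    using hmax_bound_by_cover[OF \<open>finite S\<close> \<open>R0 \<noteq> {#}\<close> gain cover] .
  moreover have "\<forall>q\<in>S. hmax (G q) < hmax (G0 q)"
    using G nonempty hmax_diff_pillars_less by (auto simp: strip_pillars_def)
  moreover have "\<forall>q\<in>S - set lst. thin l (G q)"
    using lst \<open>S \<subseteq> Qs\<close> by (auto simp: alive_def dead_def)
  ultimately show "cleaning l Qs G R R0 G0 S lst"
    using \<open>S \<subseteq> Qs\<close> size by (simp add: cleaning_def)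
  show "\<forall>q\<in>Qs. eligible l (G q)"
    using G eligible0 eligible_diff_pillars by (auto simp: strip_pillars_def)
qed

lemma cleaning_dead:
  assumes "cleaning l Qs G R R0 G0 S (q # qs)" and "dead l R (G q)"
  shows "cleaning l Qs G R R0 G0 S qs"
  using assms by (auto simp: cleaning_def dead_def)

lemma cleaning_move:
  assumes "finite Qs" and cl: "cleaning l Qs G R R0 G0 S lst" and "q \<in> set lst"
    and "count R v < hmax R"
  shows "cleaning l Qs (G(q := G q - {#v#})) (add_mset v R) R0 G0 S lst"
proof -
  have "S \<subseteq> Qs"
    using cl by (simp add: cleaning_def)
  then have "finite S"
    using \<open>finite Qs\<close> finite_subset by blast
  have "hmax (G q - {#v#}) \<le> hmax (G q)"
    by (rule hmax_mono) simp
  then show ?thesis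
    using cl \<open>q \<in> set lst\<close> size_sum_move_mono[OF \<open>finite S\<close>, of R G v q]
      hmax_add_non_pillar[OF \<open>count R v < hmax R\<close>]
    by (fastforce simp: cleaning_def intro: order_trans)
qed

lemma cleaning_group_start:
  assumes "thin l (G q)" and "\<not> conflicting R (G q)"
    and "distinct vs" and "set vs = pillars (G q)"
  shows "cleaning_group l G R q vs"
  unfolding cleaning_group_def
proof (intro exI[of _ "G q"] exI[of _ "[]"] conjI ballI)
  show "eligible l (G q)"
    using assms(1) by (rule thin_imp_eligible)
  fix v
  assume "v \<in> set vs"
  then have "v \<notin> pillars R"
    using assms(2,4) by (auto simp: conflicting_def cpillars_def)
  then show "count R v < hmax R"
    by (rule count_less_hmax)
qed (use assms(3,4) in simp_all)

lemma cleaning_group_move: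
  assumes "cleaning_group l G R q (v # vs)"
  shows "count R v < hmax R" and "cleaning_group l (G(q := G q - {#v#})) (add_mset v R) q vs"
proof -
  obtain Q ws where "eligible l Q" and dist: "distinct (ws @ v # vs)"
    and "set (ws @ v # vs) = pillars Q" and "G q = Q - mset ws"
    and less: "\<forall>w\<in>set (v # vs). count R w < hmax R"
    using assms by (auto simp: cleaning_group_def)
  then show "count R v < hmax R"
    by simp
  have "\<forall>w\<in>set vs. count (add_mset v R) w < hmax (add_mset v R)"
    using less dist hmax_add_non_pillar[of R v] by auto
  then show "cleaning_group l (G(q := G q - {#v#})) (add_mset v R) q vs"
    unfolding cleaning_group_def
    using \<open>eligible l Q\<close> dist \<open>set (ws @ v # vs) = pillars Q\<close> \<open>G q = Q - mset ws\<close>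
    by (intro exI[of _ Q] exI[of _ "ws @ [v]"]) simp
qed

lemma cleaning_group_done: "cleaning_group l G R q [] \<Longrightarrow> eligible l (G q)"
  by (auto simp: cleaning_group_def eligible_diff_pillar_list)

lemma round_start_next:
  assumes "finite Qs" and rs: "round_start l Qs r D R0 G0"
    and cl: "cleaning l Qs G R R0 G0 S []" and eligible: "\<forall>q\<in>Qs. eligible l (G q)"
    and "\<not> eligible l R"
  shows "round_start l Qs (r + 1) D R G"
proof -
  have "S \<subseteq> Qs" and hmax_R: "hmax R + 1 \<le> hmax R0 + card S"
    and size: "size R0 + (\<Sum>q\<in>S. size (G0 q)) \<le> size R + (\<Sum>q\<in>S. size (G q))"
    and lower: "\<forall>q\<in>S. hmax (G q) < hmax (G0 q)" and thin: "\<forall>q\<in>S. thin l (G q)"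
    using cl by (auto simp: cleaning_def)
  have "size (G q) + l \<le> size (G0 q)" if "q \<in> S" for q
    using rs thin lower that \<open>S \<subseteq> Qs\<close> by (intro size_thin_le) (auto simp: round_start_def)
  then have "(\<Sum>q\<in>S. size (G q) + l) \<le> (\<Sum>q\<in>S. size (G0 q))"
    by (rule sum_mono)
  then have "size R0 + l * card S \<le> size R"
    using size by (simp add: sum.distrib mult.commute)
  then have "deficit l R + int l \<le> deficit l R0"
    using hmax_R by (rule deficit_decrease)
  moreover have "l * (r + 1 - 1) = l * (r - 1) + l"
    using rs by (cases r) (auto simp: round_start_def)
  ultimately show ?thesis
    using rs eligible \<open>\<not> eligible l R\<close> by (auto simp: round_start_def)
qed

lemma selecting_start: "selecting Qs R G (pillars R) {}"
  by (simp add: selecting_def)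

lemma ctl_inv_pend_step:
  assumes "finite Qs" and "ctl c = Pend q vs k"
    and st: "step l Qs c c'" and ci: "ctl_inv l Qs (grp c) (res c) R0 G0 (ctl c)"
  shows "ctl_inv l Qs (grp c') (res c') R0 G0 (ctl c')"
proof -
  consider (exec) qs where "k = S1Exec qs" | (clean) lst where "k = S2 lst"
    using ci \<open>ctl c = Pend q vs k\<close> by (cases k) auto
  then show ?thesis
  proof cases
    case exec
    then obtain S Done ws where ex: "executing_group Qs (grp c) (res c) R0 G0 S Done q vs qs ws"
      using ci \<open>ctl c = Pend q vs k\<close> by auto
    from st show ?thesis
    proof cases
      case (pend_move q' v vs')
      then show ?thesis
        using \<open>ctl c = Pend q vs k\<close> exec ex executing_group_move[OF \<open>finite Qs\<close>] by fastforce
    next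
      case pend_done
      then show ?thesis
        using \<open>ctl c = Pend q vs k\<close> exec ex executing_group_done[OF \<open>finite Qs\<close>] by fastforce
    qed (use \<open>ctl c = Pend q vs k\<close> in auto)
  next
    case clean
    then obtain S where "q \<in> set lst" and cl: "cleaning l Qs (grp c) (res c) R0 G0 S lst"
      and grp: "cleaning_group l (grp c) (res c) q vs"
      and others: "\<forall>q'\<in>Qs - {q}. eligible l (grp c q')"
      using ci \<open>ctl c = Pend q vs k\<close> by auto
    from st show ?thesis
    proof cases
      case (pend_move q' v vs')
      then show ?thesis
        using \<open>ctl c = Pend q vs k\<close> clean \<open>q \<in> set lst\<close> others grp
          cleaning_group_move[of l "grp c" "res c" q v vs']
          cleaning_move[OF \<open>finite Qs\<close> cl \<open>q \<in> set lst\<close>]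
        by fastforce
    next
      case pend_done
      then show ?thesis
        using \<open>ctl c = Pend q vs k\<close> clean cl others grp cleaning_group_done[of l "grp c" "res c" q]
        by fastforce
    qed (use \<open>ctl c = Pend q vs k\<close> in auto)
  qed
qed

lemma ctl_inv_select_step:
  assumes "R0 \<noteq> {#}" and "ctl c = S1 P S"
    and st: "step l Qs c c'" and ci: "ctl_inv l Qs (grp c) (res c) R0 G0 (ctl c)"
  shows "ctl_inv l Qs (grp c') (res c') R0 G0 (ctl c')"
proof -
  have "grp c = G0" and "res c = R0" and sel: "selecting Qs R0 G0 P S"
    using ci \<open>ctl c = S1 P S\<close> by auto
  from st show ?thesis
  proof cases
    case (s1_pick P' S' q)
    have "selecting Qs R0 G0 (P \<inter> cpillars R0 (G0 q)) (insert q S)"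
      by (rule selecting_pick[OF sel \<open>R0 \<noteq> {#}\<close>])
        (use s1_pick \<open>ctl c = S1 P S\<close> \<open>grp c = G0\<close> \<open>res c = R0\<close> in auto)
    then show ?thesis
      using s1_pick \<open>ctl c = S1 P S\<close> \<open>grp c = G0\<close> \<open>res c = R0\<close> by simp
  next
    case (s1_exec S' qs)
    then have "executing Qs G0 R0 R0 G0 S {} qs"
      using sel \<open>ctl c = S1 P S\<close> by (auto intro!: executing_start)
    then show ?thesis
      using s1_exec \<open>grp c = G0\<close> \<open>res c = R0\<close> by auto
  qed (use \<open>ctl c = S1 P S\<close> in simp_all)
qed

lemma ctl_inv_exec_step:
  assumes "finite Qs" and rs: "round_start l Qs r D R0 G0" and "ctl c = S1Exec qs"
    and st: "step l Qs c c'" and ci: "ctl_inv l Qs (grp c) (res c) R0 G0 (ctl c)"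
  shows "ctl_inv l Qs (grp c') (res c') R0 G0 (ctl c')"
proof -
  obtain S Done where ex: "executing Qs (grp c) (res c) R0 G0 S Done qs"
    using ci \<open>ctl c = S1Exec qs\<close> by auto
  from st show ?thesis
  proof cases
    case (s1x_step q qs' vs)
    have "executing_group Qs (grp c) (res c) R0 G0 S Done q vs qs' []"
      by (rule executing_group_start) (use ex s1x_step \<open>ctl c = S1Exec qs\<close> in auto)
    then show ?thesis
      using s1x_step by auto
  next
    case (s1x_done lst)
    have "R0 \<noteq> {#}" and eligible0: "\<forall>q\<in>Qs. eligible l (G0 q)"
      using rs not_eligible_nonempty by (auto simp: round_start_def)
    have ex_done: "executing Qs (grp c) (res c) R0 G0 S Done []"
      using ex s1x_done \<open>ctl c = S1Exec qs\<close> by simp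
    from cleaning_start[OF \<open>finite Qs\<close> \<open>R0 \<noteq> {#}\<close> eligible0 ex_done \<open>set lst = _\<close>]
    show ?thesis
      using s1x_done by auto
  qed (use \<open>ctl c = S1Exec qs\<close> in simp_all)
qed

lemma ctl_inv_clean_step:
  assumes "finite Qs" and "ctl c = S2 (q # qs)"
    and st: "step l Qs c c'" and ci: "ctl_inv l Qs (grp c) (res c) R0 G0 (ctl c)"
  shows "ctl_inv l Qs (grp c') (res c') R0 G0 (ctl c')"
proof -
  obtain S where cl: "cleaning l Qs (grp c) (res c) R0 G0 S (q # qs)"
    and eligible: "\<forall>q\<in>Qs. eligible l (grp c q)"
    using ci \<open>ctl c = S2 (q # qs)\<close> by auto
  from st show ?thesis
  proof cases
    case (s2_dead q' qs')
    then have "cleaning l Qs (grp c) (res c) R0 G0 S qs"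
      using cleaning_dead[OF cl] \<open>ctl c = S2 (q # qs)\<close> by simp
    then show ?thesis
      using s2_dead \<open>ctl c = S2 (q # qs)\<close> eligible by auto
  next
    case (s2_fat q' qs' v)
    have "count (res c) v < hmax (res c)"
      by (rule count_less_hmax) (use s2_fat in simp)
    then have "cleaning l Qs (grp c') (res c') R0 G0 S (q # qs)"
      using s2_fat \<open>ctl c = S2 (q # qs)\<close> cleaning_move[OF \<open>finite Qs\<close> cl] by simp
    moreover have "eligible l (grp c q - {#v#})"
      by (rule eligible_diff_fat) (use s2_fat \<open>ctl c = S2 (q # qs)\<close> in simp_all)
    ultimately show ?thesis
      using s2_fat \<open>ctl c = S2 (q # qs)\<close> eligible by auto
  next
    case (s2_thin q' qs' vs)
    then have "cleaning_group l (grp c) (res c) q vs"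
      using \<open>ctl c = S2 (q # qs)\<close> by (intro cleaning_group_start) auto
    then show ?thesis
      using s2_thin ci \<open>ctl c = S2 (q # qs)\<close> by auto
  qed (use \<open>ctl c = S2 (q # qs)\<close> in simp_all)
qed

lemma ctl_inv_step:
  assumes "finite Qs" and rs: "round_start l Qs r D R0 G0"
    and st: "step l Qs c c'" and ci: "ctl_inv l Qs (grp c) (res c) R0 G0 (ctl c)"
    and "ctl c \<noteq> S2 []"
  shows "ctl_inv l Qs (grp c') (res c') R0 G0 (ctl c')"
proof (cases "ctl c")
  case (S1 P S)
  have "R0 \<noteq> {#}"
    using rs not_eligible_nonempty by (auto simp: round_start_def)
  then show ?thesis
    using ctl_inv_select_step[OF _ S1 st ci] by blast
next
  case (S1Exec qs)
  then show ?thesis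
    using ctl_inv_exec_step[OF \<open>finite Qs\<close> rs S1Exec st ci] by blast
next
  case (S2 lst)
  then obtain q qs where "ctl c = S2 (q # qs)"
    using \<open>ctl c \<noteq> S2 []\<close> by (cases lst) auto
  then show ?thesis
    using ctl_inv_clean_step[OF \<open>finite Qs\<close> _ st ci] by blast
next
  case (Pend q vs k)
  then show ?thesis
    using ctl_inv_pend_step[OF \<open>finite Qs\<close> _ st ci] by blast
qed (use ci in simp_all)

lemma phase3_inv_step:
  assumes "finite Qs" and inv: "phase3_inv l Qs c" and st: "step l Qs c c'"
  shows "phase3_inv l Qs c'"
proof -
  obtain R0 G0 where rs: "round_start l Qs (rnd c) (rdd c) R0 G0"
    and ci: "ctl_inv l Qs (grp c) (res c) R0 G0 (ctl c)"
    using inv by (auto simp: phase3_inv_def)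
  show ?thesis
  proof (cases "ctl c = S2 []")
    case True
    then obtain S where "cleaning l Qs (grp c) (res c) R0 G0 S []"
      and "\<forall>q\<in>Qs. eligible l (grp c q)"
      using ci by auto
    moreover from st True
    have "c' = c\<lparr>ctl := S1 (pillars (res c)) {}, rnd := rnd c + 1\<rparr> \<and> \<not> eligible l (res c)"
      by cases auto
    ultimately show ?thesis
      using round_start_next[OF \<open>finite Qs\<close> rs] selecting_start
      by (auto simp: phase3_inv_def)
  next
    case False
    from st have "rnd c' = rnd c \<and> rdd c' = rdd c"
      using ci False by cases auto
    then show ?thesis
      using rs ctl_inv_step[OF \<open>finite Qs\<close> rs st ci False] by (auto simp: phase3_inv_def)
  qed
qed

text \<open>Phase Three starts with all groups eligible: a group without alive SA values is dead,
hence thin, or empty.\<close>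

lemma algo_inv_step:
  assumes "finite Qs" and inv: "algo_inv l Qs c" and st: "step l Qs c c'"
  shows "algo_inv l Qs c'"
proof (cases "phase3_inv l Qs c")
  case True
  then show ?thesis
    using phase3_inv_step[OF \<open>finite Qs\<close> _ st] by (simp add: algo_inv_def)
next
  case False
  then have "rnd c = 0" and before: "before_phase3 (ctl c)"
    using inv by (auto simp: algo_inv_def)
  from st show ?thesis
  proof cases
    case p2_to3
    then have "round_start l Qs (rnd c') (rdd c') (res c') (grp c')"
      using eligible_if_no_alive_val by (auto simp: round_start_def)
    then show ?thesis
      using p2_to3 selecting_start by (auto simp: algo_inv_def phase3_inv_def)
  next
    case (pend_move q v vs k)
    then show ?thesis
      using \<open>rnd c = 0\<close> before by (cases k) (auto simp: algo_inv_def)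
  next
    case (pend_done q k)
    then show ?thesis
      using \<open>rnd c = 0\<close> before by (cases k) (auto simp: algo_inv_def)
  qed (use \<open>rnd c = 0\<close> before in \<open>auto simp: algo_inv_def\<close>)
qed

theorem lemma9:
  fixes T :: "('q \<times> 'v) multiset" and l :: nat and qs :: "'q list"
    and c :: "('q, 'v) conf"
  assumes "eligible l (image_mset snd T)"
    and "distinct qs" and "set qs = group_ids T"
    and "(step l (group_ids T))\<^sup>*\<^sup>* (init_conf T qs) c"
  shows "rnd c \<le> hmax (rdd c)"
proof -
  have fin: "finite (group_ids T)"
    by (simp add: group_ids_def)
  have "algo_inv l (group_ids T) (init_conf T qs)"
    by (simp add: algo_inv_def init_conf_def)
  with assms(4) have "algo_inv l (group_ids T) c"
    by (induction rule: rtranclp_induct) (auto intro: algo_inv_step[OF fin])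
  then show ?thesis
    using round_start_bound by (auto simp: algo_inv_def phase3_inv_def)
qed

end
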